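(* Let $(Z,Y)$ be random with $Z\in[0,1]$, $Y\in\{0,1\}$, let $g:[0,1]\to[0,1]$, let $\alpha\ge1$, and let $\mathcal{B}=\{I_1,\dots,I_B\}$ be an $\alpha$-well-balanced binning scheme of size $B$ (with respect to $g(Z)$). Then $\mathrm{MSE}(g_{\mathcal{B}})\le \mathrm{MSE}(g)+\frac{2\alpha}{B}$.
   Context: A binning scheme of size $B$ is a set of intervals $I_1,\dots,I_B$ partitioning $[0,1]$; $\beta(z)$ is the index $j$ with $z\in I_j$. It is $\alpha$-well-balanced if $\frac{1}{\alpha B}\le\Pr(g(Z)\in I_j)\le\frac{\alpha}{B}$ for all $j$. $g_{\mathcal{B}}(z)=\mathbb{E}[g(Z)\mid g(Z)\in I_{\beta(g(z))}]$ and $\mathrm{MSE}(h)=\mathbb{E}[(h(Z)-Y)^2]$. *)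

theory Defs
  imports "HOL-Probability.Probability"
begin

definition binning_scheme :: "(nat \<Rightarrow> real set) \<Rightarrow> nat \<Rightarrow> bool" where
  "binning_scheme I B \<longleftrightarrow> B \<ge> 1
     \<and> (\<forall>j\<in>{1..B}. is_interval (I j))
     \<and> (\<forall>i\<in>{1..B}. \<forall>j\<in>{1..B}. i \<noteq> j \<longrightarrow> I i \<inter> I j = {})
     \<and> (\<Union>j\<in>{1..B}. I j) = {0..1}"

definition bin_index :: "(nat \<Rightarrow> real set) \<Rightarrow> nat \<Rightarrow> real \<Rightarrow> nat" where
  "bin_index I B z = (THE j. j \<in> {1..B} \<and> z \<in> I j)"

definition well_balanced ::
  "'a measure \<Rightarrow> ('a \<Rightarrow> real) \<Rightarrow> real \<Rightarrow> (nat \<Rightarrow> real set) \<Rightarrow> nat \<Rightarrow> bool" where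
  "well_balanced M X \<alpha> I B \<longleftrightarrow>
     (\<forall>j\<in>{1..B}. 1 / (\<alpha> * real B) \<le> measure M {\<omega> \<in> space M. X \<omega> \<in> I j}
                 \<and> measure M {\<omega> \<in> space M. X \<omega> \<in> I j} \<le> \<alpha> / real B)"

definition cond_exp_event :: "'a measure \<Rightarrow> ('a \<Rightarrow> real) \<Rightarrow> 'a set \<Rightarrow> real" where
  "cond_exp_event M X A = (\<integral>\<omega>. X \<omega> * indicator A \<omega> \<partial>M) / measure M A"

definition binned :: "'a measure \<Rightarrow> ('a \<Rightarrow> real) \<Rightarrow> (real \<Rightarrow> real) \<Rightarrow> (nat \<Rightarrow> real set) \<Rightarrow> nat
    \<Rightarrow> real \<Rightarrow> real" where
  "binned M Z g I B z = cond_exp_event M (\<lambda>\<omega>. g (Z \<omega>))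
      {\<omega> \<in> space M. g (Z \<omega>) \<in> I (bin_index I B (g z))}"

definition MSE :: "'a measure \<Rightarrow> ('a \<Rightarrow> real) \<Rightarrow> ('a \<Rightarrow> real) \<Rightarrow> (real \<Rightarrow> real) \<Rightarrow> real" where
  "MSE M Z Y h = (\<integral>\<omega>. (h (Z \<omega>) - Y \<omega>)\<^sup>2 \<partial>M)"

end

theory Submission
  imports Defs
begin

text \<open>
  The binned value \<open>g\<^sub>\<B>(z)\<close> is the mean of \<open>g(Z)\<close> over the bin \<open>I\<^sub>j\<close> containing \<open>g(z)\<close>, so it lies
  between \<open>inf I\<^sub>j\<close> and \<open>sup I\<^sub>j\<close> and differs from \<open>g(z)\<close> by at most the length \<open>|I\<^sub>j|\<close>. As all
  values lie in \<open>[0,1]\<close>, moving a prediction by \<open>d\<close> raises its squared error by at most \<open>2d\<close>.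
  Averaging, the MSE grows by at most \<open>2 \<Sum>\<^sub>j |I\<^sub>j| Pr(g(Z) \<in> I\<^sub>j) \<le> 2 (\<alpha>/B) \<Sum>\<^sub>j |I\<^sub>j| = 2\<alpha>/B\<close>,
  since the bins partition \<open>[0,1]\<close>.
\<close>

lemma measure_lborel_interval:
  fixes S :: "real set"
  assumes "is_interval S" "bounded S" "S \<noteq> {}"
  shows "measure lborel S = Sup S - Inf S"
proof -
  have bdd: "bdd_below S" "bdd_above S"
    using assms(2) by (auto intro: bounded_imp_bdd_below bounded_imp_bdd_above)
  have inner: "{Inf S<..<Sup S} \<subseteq> S"
  proof
    fix x assume x: "x \<in> {Inf S<..<Sup S}"
    obtain s where "s \<in> S" "s < x" using x assms(3) bdd by (auto simp: cInf_less_iff)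
    moreover obtain t where "t \<in> S" "x < t" using x assms(3) bdd by (auto simp: less_cSup_iff)
    ultimately show "x \<in> S" using assms(1) unfolding is_interval_1 by (meson less_imp_le)
  qed
  have outer: "S \<subseteq> {Inf S..Sup S}"
    using bdd by (auto intro: cInf_lower cSup_upper)
  have Icc: "{Inf S..Sup S} \<in> fmeasurable lborel"
    by (intro fmeasurable_compact) simp
  have S: "S \<in> fmeasurable lborel"
    using fmeasurableI2[OF Icc outer] real_interval_borel_measurable[OF assms(1)] by simp
  have "measure lborel {Inf S<..<Sup S} \<le> measure lborel S"
    using inner S by (intro measure_mono_fmeasurable) auto
  moreover have "measure lborel S \<le> measure lborel {Inf S..Sup S}"
    using outer S Icc by (intro measure_mono_fmeasurable) auto
  moreover have "Inf S \<le> Sup S"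
    using bdd assms(3) by (simp add: cInf_le_cSup)
  ultimately show ?thesis by simp
qed

lemma cond_exp_event_mem_Icc:
  assumes "finite_measure M" "A \<in> sets M" "measure M A > 0" "X \<in> borel_measurable M"
    and "\<And>\<omega>. \<omega> \<in> A \<Longrightarrow> X \<omega> \<in> {a..b}"
  shows "cond_exp_event M X A \<in> {a..b}"
proof -
  interpret finite_measure M by fact
  have [measurable]: "A \<in> sets M" "X \<in> borel_measurable M" by fact+
  have int: "integrable M (\<lambda>\<omega>. X \<omega> * indicator A \<omega>)"
    by (rule integrable_const_bound[where B="max \<bar>a\<bar> \<bar>b\<bar>"], rule AE_I2)
       (auto dest!: assms(5) simp: indicator_def)
  have int_const: "integrable M (\<lambda>\<omega>. c * indicator A \<omega>)" for c :: real
    using assms(2) by (intro integrable_mult_right integrable_real_indicator) (auto simp: less_top[symmetric])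
  have const: "(\<integral>\<omega>. c * indicator A \<omega> \<partial>M) = c * measure M A" for c
    using sets.Int_space_eq2[OF assms(2)] by simp
  have "(\<integral>\<omega>. a * indicator A \<omega> \<partial>M) \<le> (\<integral>\<omega>. X \<omega> * indicator A \<omega> \<partial>M)"
    by (intro integral_mono int int_const) (auto dest: assms(5) simp: indicator_def)
  moreover have "(\<integral>\<omega>. X \<omega> * indicator A \<omega> \<partial>M) \<le> (\<integral>\<omega>. b * indicator A \<omega> \<partial>M)"
    by (intro integral_mono int int_const) (auto dest: assms(5) simp: indicator_def)
  ultimately show ?thesis
    using assms(3) by (simp add: const cond_exp_event_def field_simps)
qed

lemma binning_scheme_bin_index:
  assumes "binning_scheme I B" "j \<in> {1..B}" "z \<in> I j"
  shows "bin_index I B z = j"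
proof -
  have "\<exists>!j. j \<in> {1..B} \<and> z \<in> I j"
    using assms unfolding binning_scheme_def by blast
  then show ?thesis
    unfolding bin_index_def by (rule the1_equality) (use assms(2,3) in simp)
qed

lemma binning_scheme_bin_index_mem:
  assumes "binning_scheme I B" "z \<in> {0..1}"
  shows "bin_index I B z \<in> {1..B}" and "z \<in> I (bin_index I B z)"
proof -
  obtain j where "j \<in> {1..B}" "z \<in> I j"
    using assms unfolding binning_scheme_def by blast
  with binning_scheme_bin_index[OF assms(1)] show "bin_index I B z \<in> {1..B}" "z \<in> I (bin_index I B z)"
    by auto
qed

lemma binning_scheme_sum_indicator:
  fixes c :: "nat \<Rightarrow> real"
  assumes "binning_scheme I B" "\<omega> \<in> space M" "X \<omega> \<in> {0..1}"
  shows "(\<Sum>j\<in>{1..B}. c j * indicator {\<omega> \<in> space M. X \<omega> \<in> I j} \<omega>) = c (bin_index I B (X \<omega>))"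
proof (rule sum_indicator_disjoint_family)
  show "disjoint_family_on (\<lambda>j. {\<omega> \<in> space M. X \<omega> \<in> I j}) {1..B}"
    using assms(1) unfolding binning_scheme_def disjoint_family_on_def by blast
qed (use binning_scheme_bin_index_mem[OF assms(1,3)] assms(2) in auto)

lemma (in finite_measure) integral_bin_function:
  fixes f :: "nat \<Rightarrow> real"
  assumes "binning_scheme I B" "X \<in> borel_measurable M" "\<And>\<omega>. \<omega> \<in> space M \<Longrightarrow> X \<omega> \<in> {0..1}"
  shows "integrable M (\<lambda>\<omega>. f (bin_index I B (X \<omega>)))"
    and "(\<integral>\<omega>. f (bin_index I B (X \<omega>)) \<partial>M) = (\<Sum>j\<in>{1..B}. f j * measure M {\<omega> \<in> space M. X \<omega> \<in> I j})"
proof -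
  define A where "A j = {\<omega> \<in> space M. X \<omega> \<in> I j}" for j
  have [measurable]: "X \<in> borel_measurable M" by fact
  have [measurable]: "A j \<in> sets M" if "j \<in> {1..B}" for j
  proof -
    have [measurable]: "I j \<in> sets borel"
      using assms(1) that unfolding binning_scheme_def by (auto intro: real_interval_borel_measurable)
    show ?thesis
      unfolding A_def by measurable
  qed
  have step: "f (bin_index I B (X \<omega>)) = (\<Sum>j\<in>{1..B}. f j * indicator (A j) \<omega>)" if "\<omega> \<in> space M" for \<omega>
    unfolding A_def using binning_scheme_sum_indicator[where X=X, OF assms(1) that assms(3)[OF that]] by simp
  have bin_integrable: "integrable M (\<lambda>\<omega>. f j * indicator (A j) \<omega>)" if "j \<in> {1..B}" for j
    using that by (intro integrable_mult_right integrable_real_indicator) (auto simp: less_top[symmetric])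
  then have "integrable M (\<lambda>\<omega>. \<Sum>j\<in>{1..B}. f j * indicator (A j) \<omega>)"
    by (rule Bochner_Integration.integrable_sum)
  then show "integrable M (\<lambda>\<omega>. f (bin_index I B (X \<omega>)))"
    using step by (subst Bochner_Integration.integrable_cong[OF refl]) auto
  have "(\<integral>\<omega>. f (bin_index I B (X \<omega>)) \<partial>M) = (\<integral>\<omega>. (\<Sum>j\<in>{1..B}. f j * indicator (A j) \<omega>) \<partial>M)"
    by (rule Bochner_Integration.integral_cong[OF refl step])
  also have "\<dots> = (\<Sum>j\<in>{1..B}. f j * measure M (A j))"
    using bin_integrable by (subst Bochner_Integration.integral_sum) (auto intro!: sum.cong)
  finally show "(\<integral>\<omega>. f (bin_index I B (X \<omega>)) \<partial>M) = (\<Sum>j\<in>{1..B}. f j * measure M {\<omega> \<in> space M. X \<omega> \<in> I j})"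
    unfolding A_def .
qed

lemma well_balanced_measure_pos:
  assumes "well_balanced M X \<alpha> I B" "\<alpha> > 0" "j \<in> {1..B}"
  shows "0 < measure M {\<omega> \<in> space M. X \<omega> \<in> I j}"
proof -
  have "0 < 1 / (\<alpha> * real B)"
    using assms(2,3) by auto
  with assms(1,3) show ?thesis
    unfolding well_balanced_def by (meson order_less_le_trans)
qed

lemma binning_scheme_total_length:
  assumes "binning_scheme I B"
  shows "(\<Sum>j\<in>{1..B}. measure lborel (I j)) = 1"
proof -
  have intervals: "\<And>j. j \<in> {1..B} \<Longrightarrow> is_interval (I j)"
    and disjoint: "disjoint_family_on I {1..B}"
    and cover: "(\<Union>j\<in>{1..B}. I j) = {0..1}"
    using assms unfolding binning_scheme_def disjoint_family_on_def by auto
  have "measure lborel (\<Union>j\<in>{1..B}. I j) = (\<Sum>j\<in>{1..B}. measure lborel (I j))"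
  proof (rule measure_finite_Union)
    show "I ` {1..B} \<subseteq> sets lborel"
      using intervals real_interval_borel_measurable by auto
    fix j assume "j \<in> {1..B}"
    then have "emeasure lborel (I j) \<le> emeasure lborel {0..1::real}"
      using cover by (intro emeasure_mono) auto
    then show "emeasure lborel (I j) \<noteq> \<infinity>"
      by (auto simp: top_unique)
  qed (use disjoint in auto)
  then show ?thesis
    using cover by simp
qed

lemma well_balanced_expected_bin_length:
  assumes "binning_scheme I B" "well_balanced M X \<alpha> I B"
  shows "(\<Sum>j\<in>{1..B}. measure lborel (I j) * measure M {\<omega> \<in> space M. X \<omega> \<in> I j}) \<le> \<alpha> / real B"
proof -
  have "(\<Sum>j\<in>{1..B}. measure lborel (I j) * measure M {\<omega> \<in> space M. X \<omega> \<in> I j})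
      \<le> (\<Sum>j\<in>{1..B}. measure lborel (I j) * (\<alpha> / real B))"
    using assms(2) unfolding well_balanced_def by (intro sum_mono mult_left_mono) auto
  also have "\<dots> = (\<Sum>j\<in>{1..B}. measure lborel (I j)) * (\<alpha> / real B)"
    by (rule sum_distrib_right[symmetric])
  also have "\<dots> = \<alpha> / real B"
    using binning_scheme_total_length[OF assms(1)] by simp
  finally show ?thesis .
qed

lemma power2_diff_le_add_abs:
  fixes m x y :: real
  assumes "m \<in> {0..1}" "x \<in> {0..1}" "y \<in> {0..1}"
  shows "(m - y)\<^sup>2 \<le> (x - y)\<^sup>2 + 2 * \<bar>m - x\<bar>"
proof -
  have "(m - y)\<^sup>2 - (x - y)\<^sup>2 = (m - x) * (m + x - 2 * y)"
    by (simp add: power2_eq_square algebra_simps)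
  also have "\<dots> \<le> \<bar>m - x\<bar> * \<bar>m + x - 2 * y\<bar>"
    by (metis abs_ge_self abs_mult)
  also have "\<dots> \<le> \<bar>m - x\<bar> * 2"
    using assms by (intro mult_left_mono) auto
  finally show ?thesis by simp
qed

lemma (in finite_measure) integral_power2_diff_le:
  fixes U X Y D :: "'a \<Rightarrow> real"
  assumes [measurable]: "U \<in> borel_measurable M" "X \<in> borel_measurable M" "Y \<in> borel_measurable M"
    and unit: "\<And>\<omega>. \<omega> \<in> space M \<Longrightarrow> U \<omega> \<in> {0..1} \<and> X \<omega> \<in> {0..1} \<and> Y \<omega> \<in> {0..1}"
    and D: "integrable M D" "\<And>\<omega>. \<omega> \<in> space M \<Longrightarrow> \<bar>U \<omega> - X \<omega>\<bar> \<le> D \<omega>"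
  shows "(\<integral>\<omega>. (U \<omega> - Y \<omega>)\<^sup>2 \<partial>M) \<le> (\<integral>\<omega>. (X \<omega> - Y \<omega>)\<^sup>2 \<partial>M) + 2 * (\<integral>\<omega>. D \<omega> \<partial>M)"
proof -
  have integrable_sq: "integrable M (\<lambda>\<omega>. (V \<omega> - Y \<omega>)\<^sup>2)"
    if [measurable]: "V \<in> borel_measurable M"
      and V01: "\<And>\<omega>. \<omega> \<in> space M \<Longrightarrow> V \<omega> \<in> {0..1}" for V
  proof (rule integrable_const_bound[where B=1], rule AE_I2)
    fix \<omega> assume "\<omega> \<in> space M"
    then show "norm ((V \<omega> - Y \<omega>)\<^sup>2) \<le> 1"
      using V01[of \<omega>] unit[of \<omega>] by (auto simp: abs_square_le_1 abs_le_iff)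
  qed simp
  have int_U: "integrable M (\<lambda>\<omega>. (U \<omega> - Y \<omega>)\<^sup>2)"
    and int_X: "integrable M (\<lambda>\<omega>. (X \<omega> - Y \<omega>)\<^sup>2)"
    using unit by (auto intro: integrable_sq)
  have "(U \<omega> - Y \<omega>)\<^sup>2 \<le> (X \<omega> - Y \<omega>)\<^sup>2 + 2 * D \<omega>" if "\<omega> \<in> space M" for \<omega>
    using power2_diff_le_add_abs[of "U \<omega>" "X \<omega>" "Y \<omega>"] unit[OF that] D(2)[OF that] by auto
  then have "(\<integral>\<omega>. (U \<omega> - Y \<omega>)\<^sup>2 \<partial>M) \<le> (\<integral>\<omega>. (X \<omega> - Y \<omega>)\<^sup>2 + 2 * D \<omega> \<partial>M)"
    using int_U int_X D(1) by (intro integral_mono) auto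
  then show ?thesis
    using int_X D(1) by simp
qed

lemma binned_bounds:
  assumes "finite_measure M" "binning_scheme I B"
    and "(\<lambda>\<omega>. g (Z \<omega>)) \<in> borel_measurable M"
    and "\<forall>j\<in>{1..B}. 0 < measure M {\<omega> \<in> space M. g (Z \<omega>) \<in> I j}"
    and "g z \<in> {0..1}"
  shows "binned M Z g I B z \<in> {0..1}"
    and "\<bar>binned M Z g I B z - g z\<bar> \<le> measure lborel (I (bin_index I B (g z)))"
proof -
  define j where "j = bin_index I B (g z)"
  have j: "j \<in> {1..B}" "g z \<in> I j"
    unfolding j_def using binning_scheme_bin_index_mem[OF assms(2,5)] by auto
  have interval: "is_interval (I j)" and sub: "I j \<subseteq> {0..1}"
    using assms(2) j(1) unfolding binning_scheme_def by auto
  have bounded: "bounded (I j)"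
    using sub bounded_subset[OF bounded_closed_interval] by blast
  have hull: "I j \<subseteq> {Inf (I j)..Sup (I j)}"
    using bounded_imp_bdd_below[OF bounded] bounded_imp_bdd_above[OF bounded]
    by (auto intro: cInf_lower cSup_upper)
  have [measurable]: "I j \<in> sets borel"
    using interval by (rule real_interval_borel_measurable)
  have "Inf (I j) \<ge> 0" "Sup (I j) \<le> 1"
    using sub j(2) by (auto intro!: cInf_greatest cSup_least)
  moreover have "binned M Z g I B z \<in> {Inf (I j)..Sup (I j)}"
    unfolding binned_def j_def[symmetric]
    by (rule cond_exp_event_mem_Icc) (use assms(1,3,4) j(1) hull in auto)
  moreover have "g z \<in> {Inf (I j)..Sup (I j)}"
    using hull j(2) by blast
  moreover have "measure lborel (I j) = Sup (I j) - Inf (I j)"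
    using interval bounded j(2) by (intro measure_lborel_interval) auto
  ultimately show "binned M Z g I B z \<in> {0..1}"
    and "\<bar>binned M Z g I B z - g z\<bar> \<le> measure lborel (I (bin_index I B (g z)))"
    unfolding j_def[symmetric] by (auto simp: abs_le_iff)
qed

theorem mainTheorem6:
  fixes M :: "'a measure" and Z Y :: "'a \<Rightarrow> real" and g :: "real \<Rightarrow> real"
    and \<alpha> :: real and I :: "nat \<Rightarrow> real set" and B :: nat
  assumes "prob_space M"
    and "Z \<in> borel_measurable M" and "Y \<in> borel_measurable M"
    and "\<forall>\<omega>\<in>space M. Z \<omega> \<in> {0..1}"
    and "\<forall>\<omega>\<in>space M. Y \<omega> \<in> {0, 1}"
    and "g \<in> borel_measurable borel"
    and "\<forall>z\<in>{0..1}. g z \<in> {0..1}"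
    and "\<alpha> \<ge> 1"
    and "binning_scheme I B"
    and "well_balanced M (\<lambda>\<omega>. g (Z \<omega>)) \<alpha> I B"
  shows "MSE M Z Y (binned M Z g I B) \<le> MSE M Z Y g + 2 * \<alpha> / real B"
proof -
  interpret prob_space M by fact
  define X where "X = (\<lambda>\<omega>. g (Z \<omega>))"
  define m where "m j = cond_exp_event M X {\<omega> \<in> space M. X \<omega> \<in> I j}" for j
  define w where "w j = measure lborel (I j)" for j
  have X_meas: "X \<in> borel_measurable M"
    unfolding X_def using assms(2,6) by auto
  have XY01: "X \<omega> \<in> {0..1}" "Y \<omega> \<in> {0..1}" if "\<omega> \<in> space M" for \<omega>
    using assms(4,5,7) that unfolding X_def by auto
  note bin_function = integral_bin_function[OF assms(9) X_meas XY01(1)]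
  have binned_eq: "binned M Z g I B (Z \<omega>) = m (bin_index I B (X \<omega>))" for \<omega>
    by (simp add: binned_def X_def m_def)
  have "m (bin_index I B (X \<omega>)) \<in> {0..1}"
    and "\<bar>m (bin_index I B (X \<omega>)) - X \<omega>\<bar> \<le> w (bin_index I B (X \<omega>))"
    if "\<omega> \<in> space M" for \<omega>
    using binned_bounds[OF finite_measure_axioms assms(9), of g Z "Z \<omega>"]
      well_balanced_measure_pos[OF assms(10)] assms(8) X_meas XY01 that
    unfolding binned_eq X_def w_def by auto
  then have "(\<integral>\<omega>. (m (bin_index I B (X \<omega>)) - Y \<omega>)\<^sup>2 \<partial>M)
      \<le> (\<integral>\<omega>. (X \<omega> - Y \<omega>)\<^sup>2 \<partial>M) + 2 * (\<integral>\<omega>. w (bin_index I B (X \<omega>)) \<partial>M)"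
    using bin_function(1) XY01 X_meas assms(3)
    by (intro integral_power2_diff_le) (auto intro: borel_measurable_integrable)
  also have "(\<integral>\<omega>. w (bin_index I B (X \<omega>)) \<partial>M) \<le> \<alpha> / real B"
    using bin_function(2)[of w] well_balanced_expected_bin_length[OF assms(9,10)]
    unfolding w_def X_def by simp
  finally show ?thesis
    unfolding MSE_def binned_eq by (simp add: X_def)
qed

end
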